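(* Fix a nonzero $\alpha\in A_{\infty_1}$, integers $N\ge 0$ and $l\in\{0,\dots,d-1\}$, and put $\varepsilon=q^{-dN-l}$ and $\delta=q^{-dN}\varepsilon$. Suppose $\delta<|\alpha|^{-1}$. Then for every $x\in\alpha\hat\Lambda_\varepsilon(f)$ one has $\operatorname{dist}(x,\hat\Lambda_\varepsilon(f))<|\alpha|\delta$, where $\hat\Lambda_\varepsilon(f):=f^{-N}\sqrt D\,\Lambda_\varepsilon(f)$ and $\operatorname{dist}(x,Y)=\inf_{y\in Y}|x-y|$.
   Context: Let $q$ be a power of a prime, $k=\mathbb F_q(T)$, $A=\mathbb F_q[T]$, $k_\infty=\mathbb F_q((1/T))$ with absolute value $|x|=q^{\deg_T x}$. For $x\in k_\infty$ let $\|x\|$ be the distance from $x$ to $A$, and for $f\in k_\infty$, $\varepsilon>0$ let $\Lambda_\varepsilon(f)=\{\lambda\in A:\|\lambda f\|<\varepsilon\}$. Let $f\in k_\infty\setminus k$ be a root of $X^2-aX-b$ with $a\in A$ monic, $d:=\deg_T a\ge1$, $b\in\mathbb F_q^*$, chosen with $|f|=q^d$ (its conjugate has absolute value $q^{-d}$). Let $D=a^2+4b$, with $\sqrt D$ chosen so that $f=(a+\sqrt D)/2$ in odd characteristic and $\sqrt D=a$ in characteristic $2$. Let $K=k(f)\subset k_\infty$, $\infty_1$ the place of $K$ induced by $K\subset k_\infty$, and $A_{\infty_1}$ the ring of elements of $K$ regular away from $\infty_1$ (one has $A_{\infty_1}=\mathbb F_q[f,fT,\dots,fT^{d-1}]$);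 absolute values of elements of $K$ are taken in $k_\infty$. *)

theory Defs
  imports "HOL-Computational_Algebra.Polynomial" "HOL-Computational_Algebra.Formal_Laurent_Series"
    Complex_Main "HOL-Library.Cardinality"
begin

text \<open>Model: F_q is a finite field type 'a (q = CARD('a)); k_infinity = F_q((1/T)) is the
  type of formal Laurent series 'a fls in the variable X = 1/T, so T = X^{-1} = fls_X_inv.
  A = F_q[T] is 'a poly, embedded via T |-> fls_X_inv.\<close>

definition embA :: "'a::field poly \<Rightarrow> 'a fls" where
  "embA p = poly (map_poly fls_const p) fls_X_inv"

definition Tinf :: "'a::field fls" where
  "Tinf = fls_X_inv"

text \<open>|x| = q^(deg_T x) = q^(- X-adic order), |0| = 0.\<close>
definition absv :: "'a::{field,finite} fls \<Rightarrow> real" where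
  "absv x = (if x = 0 then 0 else real CARD('a) powr (- real_of_int (fls_subdegree x)))"

definition distA :: "'a::{field,finite} fls \<Rightarrow> real" where
  "distA x = Inf ((\<lambda>p. absv (x - embA p)) ` UNIV)"

definition Lambda :: "real \<Rightarrow> 'a::{field,finite} fls \<Rightarrow> 'a poly set" where
  "Lambda \<epsilon> f = {lam. distA (embA lam * f) < \<epsilon>}"

definition distS :: "'a::{field,finite} fls \<Rightarrow> 'a fls set \<Rightarrow> real" where
  "distS x Y = Inf ((\<lambda>y. absv (x - y)) ` Y)"

definition in_k :: "'a::field fls \<Rightarrow> bool" where
  "in_k x \<longleftrightarrow> (\<exists>p r. r \<noteq> 0 \<and> embA r * x = embA p)"

inductive_set Ainf1 :: "'a::field fls \<Rightarrow> nat \<Rightarrow> 'a fls set" for f :: "'a fls" and d :: nat where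
  const: "fls_const c \<in> Ainf1 f d"
| gen: "i < d \<Longrightarrow> f * Tinf ^ i \<in> Ainf1 f d"
| add: "x \<in> Ainf1 f d \<Longrightarrow> y \<in> Ainf1 f d \<Longrightarrow> x + y \<in> Ainf1 f d"
| mult: "x \<in> Ainf1 f d \<Longrightarrow> y \<in> Ainf1 f d \<Longrightarrow> x * y \<in> Ainf1 f d"

text \<open>sqrt D = 2f - a: equals (a + sqrt D)/2 relation in odd characteristic, and equals a
  in characteristic 2 (since 2f - a = -a = a there).\<close>
definition sqrtD :: "'a::field fls \<Rightarrow> 'a poly \<Rightarrow> 'a fls" where
  "sqrtD f a = 2 * f - embA a"

definition Lambda_hat :: "nat \<Rightarrow> real \<Rightarrow> 'a::{field,finite} fls \<Rightarrow> 'a poly \<Rightarrow> 'a fls set" where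
  "Lambda_hat N \<epsilon> f a = (\<lambda>lam. inverse f ^ N * sqrtD f a * embA lam) ` Lambda \<epsilon> f"

end

theory Submission
  imports Defs
begin

text \<open>Write \<open>\<alpha> = u + v f\<close> with \<open>u, v \<in> A\<close>, and let \<open>\<alpha>' = u + v g\<close>, where \<open>g = a - f\<close> is the
  conjugate root, \<open>|g| = q^-d\<close>. Checking on the generators \<open>f T^i\<close>, \<open>i < d\<close>, of \<open>A_\<infinity>1\<close> shows
  \<open>|\<alpha>'| \<le> 1\<close>. Given \<open>\<lambda> \<in> \<Lambda>_\<epsilon>(f)\<close> with \<open>|\<lambda> f - p| < \<epsilon>\<close>, put \<open>\<mu> = u \<lambda> + v p\<close>: since \<open>f\<close> is a root of
  \<open>X^2 - a X - b\<close>, \<open>\<mu> f - (u p + v a p + v b \<lambda>) = (\<lambda> f - p) \<alpha>'\<close>, so \<open>\<mu> \<in> \<Lambda>_\<epsilon>(f)\<close>, while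
  \<open>\<alpha> \<lambda> - \<mu> = v (\<lambda> f - p)\<close>. As \<open>\<alpha> = \<alpha>' + v \<surd>D\<close> and \<open>|v \<surd>D| \<ge> q^d > 1 \<ge> |\<alpha>'|\<close> unless \<open>v = 0\<close>,
  the ultrametric inequality gives \<open>|\<surd>D (\<alpha> \<lambda> - \<mu>)| \<le> |\<alpha>| |\<lambda> f - p| < |\<alpha>| \<epsilon>\<close>, and the factor
  \<open>f^-N\<close> contributes \<open>q^-dN\<close>.\<close>

lemma embA_0 [simp]: "embA 0 = 0"
  by (simp add: embA_def)

lemma embA_pCons: "embA (pCons c p) = fls_const c + fls_X_inv * embA p"
  by (simp add: embA_def map_poly_pCons)

lemma embA_const [simp]: "embA [:c:] = fls_const c"
  by (simp add: embA_pCons)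

lemma embA_1 [simp]: "embA 1 = 1"
  using embA_const[of 1] by (simp add: one_pCons)

lemma embA_add [simp]: "embA (p + q) = embA p + embA q"
proof (induction p arbitrary: q)
  case (pCons c p)
  then show ?case
    by (cases q) (simp add: embA_pCons fls_plus_const[symmetric] algebra_simps)
qed simp

lemma embA_smult [simp]: "embA (smult c p) = fls_const c * embA p"
  by (induction p) (simp_all add: embA_pCons algebra_simps)

lemma embA_mult [simp]: "embA (p * q) = embA p * embA q"
  by (induction p) (simp_all add: embA_pCons algebra_simps)

lemma embA_X_power: "embA ([:0, 1:] ^ i) = fls_X_inv ^ i"
  by (induction i) (simp_all add: embA_pCons)

lemma one_less_card_field: "real CARD('a::{field,finite}) > 1"
proof -
  have "card {0::'a, 1} \<le> CARD('a)"
    by (rule card_mono) auto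
  then show ?thesis
    by simp
qed

lemma absv_nonneg: "absv x \<ge> 0"
  by (simp add: absv_def)

lemma absv_pos: "x \<noteq> 0 \<Longrightarrow> absv x > 0"
  using one_less_card_field[where 'a='a] by (simp add: absv_def)

lemma absv_0 [simp]: "absv 0 = 0"
  by (simp add: absv_def)

lemma absv_mult: "absv (x * y) = absv x * absv y"
  by (cases "x = 0"; cases "y = 0") (simp_all add: absv_def powr_add[symmetric] algebra_simps)

lemma absv_uminus [simp]: "absv (- x) = absv x"
  by (simp add: absv_def fls_subdegree_minus)

lemma absv_const: "c \<noteq> 0 \<Longrightarrow> absv (fls_const c) = 1"
  by (simp add: absv_def)

lemma absv_const_le: "absv (fls_const c) \<le> 1"
  by (cases "c = 0") (simp_all add: absv_const)

lemma absv_X_inv: "absv (fls_X_inv :: 'a::{field,finite} fls) = real CARD('a)"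
  by (simp add: absv_def)

lemma absv_power: "absv (x ^ n) = absv x ^ n"
  by (induction n) (simp_all add: absv_mult absv_const[of 1, simplified])

lemma absv_inverse: "absv (inverse x) = inverse (absv x)"
proof (cases "x = 0")
  case False
  then have "absv x * absv (inverse x) = 1"
    by (simp flip: absv_mult add: absv_const[of 1, simplified])
  then show ?thesis
    by (rule inverse_unique[symmetric])
qed simp

lemma absv_add_le: "absv (x + y) \<le> max (absv x) (absv y)"
proof (cases "x = 0 \<or> y = 0 \<or> x + y = 0")
  case True
  then show ?thesis
    by (auto simp: absv_nonneg max_def)
next
  case False
  let ?q = "real CARD('a)"
  have "min (fls_subdegree x) (fls_subdegree y) \<le> fls_subdegree (x + y)"
    using False fls_plus_subdegree by blast
  then have "?q powr - real_of_int (fls_subdegree (x + y))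
      \<le> ?q powr max (- real_of_int (fls_subdegree x)) (- real_of_int (fls_subdegree y))"
    using one_less_card_field[where 'a='a] by (intro powr_mono) auto
  also have "\<dots> = max (?q powr - real_of_int (fls_subdegree x)) (?q powr - real_of_int (fls_subdegree y))"
    using one_less_card_field[where 'a='a] by (auto simp: max_def powr_le_cancel_iff)
  finally show ?thesis
    using False by (simp add: absv_def)
qed

lemma absv_add_eq_right:
  assumes "absv x < absv y"
  shows "absv (x + y) = absv y"
proof (cases "x = 0")
  case False
  have y: "y \<noteq> 0"
    using assms absv_nonneg[of x] by auto
  have "fls_subdegree y < fls_subdegree x"
    using assms False y one_less_card_field[where 'a='a] by (simp add: absv_def powr_less_cancel_iff)
  then have "fls_subdegree (x + y) = fls_subdegree y"
    by (rule fls_subdegree_add_eq2[OF y])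
  moreover have "x + y \<noteq> 0"
    using assms by (metis absv_uminus add_eq_0_iff less_irrefl)
  ultimately show ?thesis
    using y by (simp add: absv_def)
qed simp

lemma absv_embA: "p \<noteq> 0 \<Longrightarrow> absv (embA p :: 'a::{field,finite} fls) = real CARD('a) ^ degree p"
proof (induction p)
  case (pCons c p)
  show ?case
  proof (cases "p = 0")
    case True
    then show ?thesis
      using pCons.hyps by (simp add: embA_pCons absv_const)
  next
    case False
    have X_p: "absv (fls_X_inv * embA p :: 'a fls) = real CARD('a) ^ Suc (degree p)"
      using pCons.IH[OF False] by (simp add: absv_mult absv_X_inv)
    have "1 < real CARD('a) ^ Suc (degree p)"
      using one_less_card_field[where 'a='a] by (intro one_less_power) auto
    then have "absv (fls_const c :: 'a fls) < absv (fls_X_inv * embA p :: 'a fls)"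
      using absv_const_le[of c] X_p by linarith
    from absv_add_eq_right[OF this] show ?thesis
      using X_p False by (simp add: embA_pCons)
  qed
qed simp

lemma distA_le: "distA x \<le> absv (x - embA p)"
  unfolding distA_def by (rule cInf_lower) (auto intro!: bdd_belowI[of _ 0] simp: absv_nonneg)

lemma distA_lessE:
  assumes "distA x < \<epsilon>"
  obtains p where "absv (x - embA p) < \<epsilon>"
  using assms cInf_lessD[of "(\<lambda>p. absv (x - embA p)) ` UNIV" \<epsilon>] unfolding distA_def by auto

lemma distS_le: "y \<in> Y \<Longrightarrow> distS x Y \<le> absv (x - y)"
  unfolding distS_def by (rule cInf_lower) (auto intro!: bdd_belowI[of _ 0] simp: absv_nonneg)

lemma quadratic_mult:
  fixes g :: "'b::comm_ring_1"
  assumes "g ^ 2 = A * g + B"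
  shows "(U1 + V1 * g) * (U2 + V2 * g) = (U1 * U2 + V1 * V2 * B) + (U1 * V2 + U2 * V1 + V1 * V2 * A) * g"
proof -
  have "(U1 + V1 * g) * (U2 + V2 * g) = U1 * U2 + (U1 * V2 + U2 * V1) * g + V1 * V2 * g ^ 2"
    by (simp add: algebra_simps power2_eq_square)
  then show ?thesis
    by (simp add: assms algebra_simps)
qed

lemma Ainf1_conjugate_bounded:
  fixes f g :: "'a::{field,finite} fls"
  assumes "x \<in> Ainf1 f d"
    and f_root: "f ^ 2 = embA a * f + fls_const b"
    and g_root: "g ^ 2 = embA a * g + fls_const b"
    and g_small: "absv g \<le> inverse (real CARD('a) ^ d)"
  shows "\<exists>u v. x = embA u + embA v * f \<and> absv (embA u + embA v * g) \<le> 1"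
  using assms(1)
proof induction
  case (const c)
  show ?case
    by (rule exI[of _ "[:c:]"], rule exI[of _ 0]) (simp add: absv_const_le)
next
  case (gen i)
  let ?q = "real CARD('a)"
  have "?q ^ i \<le> ?q ^ d"
    using one_less_card_field[where 'a='a] gen by (intro power_increasing) auto
  then have "?q ^ i * absv g \<le> ?q ^ d * inverse (?q ^ d)"
    using g_small absv_nonneg[of g] by (intro mult_mono) auto
  then have "?q ^ i * absv g \<le> 1"
    using one_less_card_field[where 'a='a] by simp
  then have "absv (embA ([:0, 1:] ^ i) * g) \<le> 1"
    by (simp add: embA_X_power absv_mult absv_power absv_X_inv)
  then show ?case
    by (intro exI[of _ "0 :: 'a poly"] exI[of _ "[:0, 1:] ^ i"]) (simp add: embA_X_power Tinf_def mult.commute)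
next
  case (add x y)
  then obtain u1 v1 u2 v2
    where "x = embA u1 + embA v1 * f" "absv (embA u1 + embA v1 * g) \<le> 1"
      and "y = embA u2 + embA v2 * f" "absv (embA u2 + embA v2 * g) \<le> 1"
    by blast
  then show ?case
    using absv_add_le[of "embA u1 + embA v1 * g" "embA u2 + embA v2 * g"]
    by (intro exI[of _ "u1 + u2"] exI[of _ "v1 + v2"]) (simp add: algebra_simps)
next
  case (mult x y)
  then obtain u1 v1 u2 v2
    where x: "x = embA u1 + embA v1 * f" "absv (embA u1 + embA v1 * g) \<le> 1"
      and y: "y = embA u2 + embA v2 * f" "absv (embA u2 + embA v2 * g) \<le> 1"
    by blast
  let ?u = "u1 * u2 + v1 * v2 * [:b:]" and ?v = "u1 * v2 + u2 * v1 + v1 * v2 * a"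
  have "x * y = embA ?u + embA ?v * f"
    using quadratic_mult[OF f_root, of "embA u1" "embA v1" "embA u2" "embA v2"] x y by simp
  moreover have "absv ((embA u1 + embA v1 * g) * (embA u2 + embA v2 * g)) \<le> 1"
    using x y by (simp add: absv_mult mult_le_one absv_nonneg)
  then have "absv (embA ?u + embA ?v * g) \<le> 1"
    using quadratic_mult[OF g_root, of "embA u1" "embA v1" "embA u2" "embA v2"] by (simp add: mult_ac)
  ultimately show ?case
    by blast
qed

lemma conjugate_root:
  assumes "f ^ 2 - embA a * f - fls_const b = 0"
  shows "(embA a - f) ^ 2 = embA a * (embA a - f) + fls_const b"
    and "f * (embA a - f) = - fls_const b"
  using assms by (simp_all add: algebra_simps power2_eq_square)

lemma absv_conjugate_root:
  assumes "f ^ 2 - embA a * f - fls_const b = 0" and "b \<noteq> 0"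
  shows "absv (embA a - f) = inverse (absv f)"
proof -
  have "absv f * absv (embA a - f) = 1"
    using conjugate_root(2)[OF assms(1)] assms(2) by (simp flip: absv_mult add: absv_const)
  then show ?thesis
    by (metis inverse_unique mult.commute)
qed

lemma absv_sqrtD:
  assumes "absv (embA a - f) < absv f"
  shows "absv (sqrtD f a) = absv f"
proof -
  have "sqrtD f a = - (embA a - f) + f"
    by (simp add: sqrtD_def algebra_simps mult_2)
  also have "absv (- (embA a - f) + f) = absv f"
    using assms absv_uminus[of "embA a - f"] by (intro absv_add_eq_right) simp
  finally show ?thesis .
qed

lemma absv_inverse_power:
  assumes "absv f = real CARD('a::{field,finite}) ^ d"
  shows "absv (inverse f ^ N) = real CARD('a) powr - real (d * N)"
proof -
  have "real CARD('a) powr real (d * N) = real CARD('a) ^ (d * N)"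
    using one_less_card_field[where 'a='a] by (intro powr_realpow) auto
  then show ?thesis
    using assms by (simp add: absv_power absv_inverse powr_minus power_mult power_inverse)
qed

lemma absv_mult_le_add:
  assumes "absv x \<le> 1" and "1 < absv s"
  shows "absv (embA v * s) \<le> absv (x + embA v * s)"
proof (cases "v = 0")
  case False
  have "1 \<le> absv (embA v)"
    using absv_embA[OF False] one_less_card_field[where 'a='a] by simp
  then have "absv s \<le> absv (embA v * s)"
    using assms(2) by (simp add: absv_mult)
  then have "absv x < absv (embA v * s)"
    using assms by linarith
  then show ?thesis
    by (simp add: absv_add_eq_right)
qed (simp add: absv_nonneg)

lemma Lambda_conjugate_mult:
  assumes root: "f ^ 2 - embA a * f - fls_const b = 0"
    and conj_small: "absv (embA u + embA v * (embA a - f)) \<le> 1"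
    and lam: "absv (embA lam * f - embA p) < \<epsilon>"
  shows "u * lam + v * p \<in> Lambda \<epsilon> f"
proof -
  let ?r = "embA lam * f - embA p"
  have "embA (u * lam + v * p) * f - embA (u * p + v * a * p + v * [:b:] * lam)
      = ?r * (embA u + embA v * (embA a - f)) + embA v * embA lam * (f ^ 2 - embA a * f - fls_const b)"
    by (simp add: algebra_simps power2_eq_square)
  with root have "distA (embA (u * lam + v * p) * f) \<le> absv (?r * (embA u + embA v * (embA a - f)))"
    using distA_le[of "embA (u * lam + v * p) * f" "u * p + v * a * p + v * [:b:] * lam"]
    by (simp only: diff_self mult_zero_right add_0_right)
  also have "\<dots> \<le> absv ?r"
    using conj_small absv_nonneg[of ?r] by (simp add: absv_mult mult_left_le)
  finally show ?thesis
    using lam by (simp add: Lambda_def)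
qed

lemma Lambda_approx_mult:
  fixes f :: "'a::{field,finite} fls"
  assumes root: "f ^ 2 - embA a * f - fls_const b = 0" and b_nz: "b \<noteq> 0"
    and abs_f: "absv f = real CARD('a) ^ d" and d_pos: "d \<ge> 1"
    and alpha: "\<alpha> \<in> Ainf1 f d" "\<alpha> \<noteq> 0"
    and r: "absv (embA lam * f - embA p) < \<epsilon>"
  obtains mu where "mu \<in> Lambda \<epsilon> f"
    and "absv (sqrtD f a * (\<alpha> * embA lam - embA mu)) < absv \<alpha> * \<epsilon>"
proof -
  let ?g = "embA a - f"
  have q_d: "1 < real CARD('a) ^ d"
    using one_less_card_field[where 'a='a] d_pos by (intro one_less_power) auto
  have g: "absv ?g = inverse (absv f)"
    using absv_conjugate_root[OF root b_nz] .
  with abs_f q_d have sqrtD: "absv (sqrtD f a) = absv f"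
    by (intro absv_sqrtD) (metis inverse_less_1_iff less_trans zero_less_one)
  obtain u v where \<alpha>_uv: "\<alpha> = embA u + embA v * f" and conj: "absv (embA u + embA v * ?g) \<le> 1"
    using Ainf1_conjugate_bounded[OF alpha(1) _ conjugate_root(1)[OF root]] root g abs_f
    by (fastforce simp: algebra_simps)
  have "absv (embA v * sqrtD f a) \<le> absv \<alpha>"
    using absv_mult_le_add[OF conj, of "sqrtD f a" v] sqrtD abs_f q_d
    by (simp add: \<alpha>_uv sqrtD_def algebra_simps mult_2)
  then have "absv (embA v * sqrtD f a) * absv (embA lam * f - embA p)
      \<le> absv \<alpha> * absv (embA lam * f - embA p)"
    by (simp add: mult_right_mono absv_nonneg)
  also have "\<dots> < absv \<alpha> * \<epsilon>"
    using r absv_pos[OF alpha(2)] by simp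
  finally have "absv (embA v * sqrtD f a * (embA lam * f - embA p)) < absv \<alpha> * \<epsilon>"
    by (simp add: absv_mult)
  moreover have "embA v * sqrtD f a * (embA lam * f - embA p)
      = sqrtD f a * (\<alpha> * embA lam - embA (u * lam + v * p))"
    by (simp add: \<alpha>_uv algebra_simps)
  ultimately show ?thesis
    using that Lambda_conjugate_mult[OF root conj r] by simp
qed

theorem lemma2:
  fixes f :: "'a::{field,finite} fls" and a :: "'a poly" and b :: 'a
    and d N l :: nat and \<alpha> :: "'a fls" and \<epsilon> \<delta> :: real
  assumes monic: "lead_coeff a = 1"
    and deg: "degree a = d" and d_pos: "d \<ge> 1"
    and b_nz: "b \<noteq> 0"
    and root: "f ^ 2 - embA a * f - fls_const b = 0"
    and f_notin_k: "\<not> in_k f"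
    and abs_f: "absv f = real CARD('a) ^ d"
    and alpha: "\<alpha> \<in> Ainf1 f d" "\<alpha> \<noteq> 0"
    and l: "l < d"
    and eps: "\<epsilon> = real CARD('a) powr (- real (d * N + l))"
    and delta: "\<delta> = real CARD('a) powr (- real (d * N)) * \<epsilon>"
    and small: "\<delta> < inverse (absv \<alpha>)"
  shows "\<forall>x \<in> (\<lambda>y. \<alpha> * y) ` Lambda_hat N \<epsilon> f a.
           distS x (Lambda_hat N \<epsilon> f a) < absv \<alpha> * \<delta>"
proof
  fix x
  assume "x \<in> (\<lambda>y. \<alpha> * y) ` Lambda_hat N \<epsilon> f a"
  then obtain lam where lam: "lam \<in> Lambda \<epsilon> f"
    and x: "x = \<alpha> * (inverse f ^ N * sqrtD f a * embA lam)"
    by (auto simp: Lambda_hat_def)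
  from lam obtain p where "absv (embA lam * f - embA p) < \<epsilon>"
    by (auto simp: Lambda_def elim: distA_lessE)
  then obtain mu where mu: "mu \<in> Lambda \<epsilon> f"
    and close: "absv (sqrtD f a * (\<alpha> * embA lam - embA mu)) < absv \<alpha> * \<epsilon>"
    using Lambda_approx_mult[OF root b_nz abs_f d_pos alpha] by blast
  let ?y = "inverse f ^ N * sqrtD f a * embA mu"
  have "?y \<in> Lambda_hat N \<epsilon> f a"
    unfolding Lambda_hat_def using mu by (rule imageI)
  then have "distS x (Lambda_hat N \<epsilon> f a) \<le> absv (x - ?y)"
    by (rule distS_le)
  also have "x - ?y = inverse f ^ N * (sqrtD f a * (\<alpha> * embA lam - embA mu))"
    by (simp add: x algebra_simps)
  also have "absv \<dots> < real CARD('a) powr - real (d * N) * (absv \<alpha> * \<epsilon>)"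
    using close one_less_card_field[where 'a='a]
    by (simp add: absv_mult absv_inverse_power[OF abs_f])
  finally show "distS x (Lambda_hat N \<epsilon> f a) < absv \<alpha> * \<delta>"
    by (simp add: delta mult_ac)
qed

end
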